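(* Suppose $\{x[a_1,a_2]\}_{(a_1,a_2)\in\mathbb{Z}^2}\subset\mathcal{A}(P_1,P_2)$ is a collection such that each $x[a_1,a_2]$ is pointed at $(a_1,a_2)$, and such that $x[a_1,a_2]=z_1[a_1,a_2]$ for all $(a_1,a_2)\in\mathbb{Z}^2\setminus\mathbb{Z}_{>0}^2$. Then $\{x[a_1,a_2]\}_{(a_1,a_2)\in\mathbb{Z}^2}$ is a $\underline\Bbbk$-basis of $\mathcal{A}(P_1,P_2)$.
   Context: $\Bbbk$ is an ordered field and $P_1,P_2\in\Bbbk[z]$ are monic palindromic polynomials with coefficients in the positive cone (palindromic: $P(z)=z^dP(z^{-1})$ for $d=\deg P$). With $x_1,x_2$ commuting indeterminates, define $x_k\in\Bbbk(x_1,x_2)$ for all $k\in\mathbb{Z}$ by $x_{k+1}x_{k-1}=P_1(x_k)$ if $k$ is even and $x_{k+1}x_{k-1}=P_2(x_k)$ if $k$ is odd. $\underline\Bbbk$ is the $\mathbb{Z}$-subalgebra of $\Bbbk$ generated by the coefficients of $P_1,P_2$; $\mathcal{A}(P_1,P_2)$ is the $\underline\Bbbk$-subalgebra of $\Bbbk(x_1,x_2)$ generated by all $x_k$. An element $x\in\underline\Bbbk[x_1^{\pm1},x_2^{\pm1}]$ is pointed at $(a_1,a_2)$ if $x=x_1^{-a_1}x_2^{-a_2}\sum_{p,q\ge0}c(p,q)x_1^px_2^q$ with $c(p,q)\in\underline\Bbbk$ and $c(0,0)=1$. The standard monomial is $z_1[a_1,a_2]=x_0^{[a_2]_+}x_1^{[-a_1]_+}x_2^{[-a_2]_+}x_3^{[a_1]_+}$,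 with $[a]_+=\max(a,0)$. *)

theory Defs
  imports "HOL-Computational_Algebra.Polynomial" "HOL-Computational_Algebra.Fraction_Field"
begin

text \<open>Bivariate polynomials k[x1,x2] are modelled as 'k poly poly (inner variable x1,
outer variable x2); the rational function field k(x1,x2) is their fraction field.\<close>

type_synonym 'k ratfun = "'k poly poly fract"

definition emb :: "'k::linordered_field \<Rightarrow> 'k ratfun" where
  "emb c = Fract [:[:c:]:] 1"

definition X1 :: "'k::linordered_field ratfun" where
  "X1 = Fract [:[:0, 1:]:] 1"

definition X2 :: "'k::linordered_field ratfun" where
  "X2 = Fract [:0, 1:] 1"

definition evalP :: "'k::linordered_field poly \<Rightarrow> 'k ratfun \<Rightarrow> 'k ratfun" where
  "evalP P y = poly (map_poly emb P) y"

definition Pk :: "'k::linordered_field poly \<Rightarrow> 'k poly \<Rightarrow> int \<Rightarrow> 'k poly" where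
  "Pk P1 P2 k = (if even k then P1 else P2)"

text \<open>fwd n = (x_(n+1), x_(n+2)); recurrence x_(k+1) = P(x_k) / x_(k-1) with k = n+2.\<close>
fun fwd :: "'k::linordered_field poly \<Rightarrow> 'k poly \<Rightarrow> nat \<Rightarrow> 'k ratfun \<times> 'k ratfun" where
  "fwd P1 P2 0 = (X1, X2)"
| "fwd P1 P2 (Suc n) =
     (let (a, b) = fwd P1 P2 n in (b, evalP (Pk P1 P2 (int n + 2)) b / a))"

text \<open>bwd n = (x_(1-n), x_(2-n)); recurrence x_(k-1) = P(x_k) / x_(k+1) with k = 1-n.\<close>
fun bwd :: "'k::linordered_field poly \<Rightarrow> 'k poly \<Rightarrow> nat \<Rightarrow> 'k ratfun \<times> 'k ratfun" where
  "bwd P1 P2 0 = (X1, X2)"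
| "bwd P1 P2 (Suc n) =
     (let (a, b) = bwd P1 P2 n in (evalP (Pk P1 P2 (1 - int n)) a / b, a))"

definition xk :: "'k::linordered_field poly \<Rightarrow> 'k poly \<Rightarrow> int \<Rightarrow> 'k ratfun" where
  "xk P1 P2 k = (if k \<ge> 1 then fst (fwd P1 P2 (nat (k - 1))) else fst (bwd P1 P2 (nat (1 - k))))"

inductive_set kk :: "'k::linordered_field poly \<Rightarrow> 'k poly \<Rightarrow> 'k set" for P1 P2 where
  one: "1 \<in> kk P1 P2"
| coeff1: "coeff P1 i \<in> kk P1 P2"
| coeff2: "coeff P2 i \<in> kk P1 P2"
| add: "a \<in> kk P1 P2 \<Longrightarrow> b \<in> kk P1 P2 \<Longrightarrow> a + b \<in> kk P1 P2"
| neg: "a \<in> kk P1 P2 \<Longrightarrow> - a \<in> kk P1 P2"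
| mult: "a \<in> kk P1 P2 \<Longrightarrow> b \<in> kk P1 P2 \<Longrightarrow> a * b \<in> kk P1 P2"

inductive_set clalg :: "'k::linordered_field poly \<Rightarrow> 'k poly \<Rightarrow> 'k ratfun set" for P1 P2 where
  scal: "c \<in> kk P1 P2 \<Longrightarrow> emb c \<in> clalg P1 P2"
| var: "xk P1 P2 k \<in> clalg P1 P2"
| add: "a \<in> clalg P1 P2 \<Longrightarrow> b \<in> clalg P1 P2 \<Longrightarrow> a + b \<in> clalg P1 P2"
| mult: "a \<in> clalg P1 P2 \<Longrightarrow> b \<in> clalg P1 P2 \<Longrightarrow> a * b \<in> clalg P1 P2"

definition pointed :: "'k::linordered_field poly \<Rightarrow> 'k poly \<Rightarrow> 'k ratfun \<Rightarrow> int \<Rightarrow> int \<Rightarrow> bool" where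
  "pointed P1 P2 x a1 a2 \<longleftrightarrow>
     (\<exists>(c :: nat \<Rightarrow> nat \<Rightarrow> 'k) (N :: nat).
        (\<forall>p q. c p q \<in> kk P1 P2) \<and> c 0 0 = 1 \<and>
        x = X1 powi (- a1) * X2 powi (- a2) *
            (\<Sum>p\<le>N. \<Sum>q\<le>N. emb (c p q) * X1 ^ p * X2 ^ q))"

definition z1 :: "'k::linordered_field poly \<Rightarrow> 'k poly \<Rightarrow> int \<Rightarrow> int \<Rightarrow> 'k ratfun" where
  "z1 P1 P2 a1 a2 =
     xk P1 P2 0 ^ nat a2 * xk P1 P2 1 ^ nat (- a1) * xk P1 P2 2 ^ nat (- a2) * xk P1 P2 3 ^ nat a1"

definition is_basis ::
  "'k::linordered_field set \<Rightarrow> 'k ratfun set \<Rightarrow> 'i set \<Rightarrow> ('i \<Rightarrow> 'k ratfun) \<Rightarrow> bool" where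
  "is_basis R M I f \<longleftrightarrow>
     (\<forall>i\<in>I. f i \<in> M) \<and>
     (\<forall>y\<in>M. \<exists>S c. finite S \<and> S \<subseteq> I \<and> (\<forall>i\<in>S. c i \<in> R) \<and>
                   y = (\<Sum>i\<in>S. emb (c i) * f i)) \<and>
     (\<forall>S c. finite S \<and> S \<subseteq> I \<and> (\<forall>i\<in>S. c i \<in> R) \<and> (\<Sum>i\<in>S. emb (c i) * f i) = 0
            \<longrightarrow> (\<forall>i\<in>S. c i = 0))"

end

theory Submission
  imports Defs "HOL-Library.Product_Order"
begin

text \<open>Palindromicity of the exchange polynomials makes each \<open>x\<^sub>k\<^sub>\<plusminus>\<^sub>4\<close> a polynomial in four
  consecutive cluster variables, so \<open>\<A>(P\<^sub>1,P\<^sub>2)\<close> is generated by \<open>x\<^sub>0,\<dots>,x\<^sub>3\<close>; the exchange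
  relations \<open>x\<^sub>0x\<^sub>2 = P\<^sub>1(x\<^sub>1)\<close> and \<open>x\<^sub>1x\<^sub>3 = P\<^sub>2(x\<^sub>2)\<close> then rewrite every monomial in
  \<open>x\<^sub>0,\<dots>,x\<^sub>3\<close> as a combination of standard monomials \<open>z\<^sub>1[a]\<close>, which therefore span.
  Every \<open>z\<^sub>1[a]\<close> is pointed at \<open>a\<close>, and an element pointed at \<open>a\<close> differs from \<open>z\<^sub>1[a]\<close> by
  standard monomials indexed strictly below \<open>a\<close> in the componentwise order, as one sees by
  reading off Laurent coefficients at a maximal index. Hence the given family is unitriangular
  with respect to the standard monomials: it spans by induction on \<open>a\<^sub>1 + a\<^sub>2\<close> over the positive
  quadrant, and it is linearly independent because a nontrivial relation would have a nonzero
  Laurent coefficient at a maximal index of its support.\<close>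

lemma emb_0 [simp]: "emb 0 = 0"
  unfolding emb_def by (simp add: Zero_fract_def)

lemma emb_1 [simp]: "emb 1 = 1"
  unfolding emb_def by (simp add: One_fract_def one_pCons)

lemma emb_add: "emb (a + b) = emb a + emb b"
  unfolding emb_def by simp

lemma emb_mult: "emb (a * b) = emb a * emb b"
  unfolding emb_def by simp

lemma emb_uminus: "emb (- a) = - emb a"
  unfolding emb_def by simp

lemma emb_eq_0_iff: "emb c = 0 \<longleftrightarrow> c = 0"
  unfolding emb_def by (simp add: Zero_fract_def eq_fract)

lemma const_poly_pos_iff: "0 < [:c::'a::linordered_idom:] \<longleftrightarrow> 0 < c"
  by (simp add: less_poly_def pos_poly_pCons)

lemma monom_1_poly_pos_iff: "0 < [:0, c::'a::linordered_idom:] \<longleftrightarrow> 0 < c"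
  by (simp add: less_poly_def pos_poly_pCons)

lemma emb_nonneg: "0 \<le> c \<Longrightarrow> (0::'k::linordered_field ratfun) \<le> emb c"
  unfolding emb_def by (subst zero_le_Fract_iff) (auto simp: le_less const_poly_pos_iff)

lemma X1_pos: "(0::'k::linordered_field ratfun) < X1"
  unfolding X1_def by (simp add: zero_less_Fract_iff const_poly_pos_iff monom_1_poly_pos_iff)

lemma X2_pos: "(0::'k::linordered_field ratfun) < X2"
  unfolding X2_def by (simp add: zero_less_Fract_iff const_poly_pos_iff monom_1_poly_pos_iff)

lemma X1_nonzero: "X1 \<noteq> (0::'k::linordered_field ratfun)"
  using X1_pos by (metis less_irrefl)

lemma X2_nonzero: "X2 \<noteq> (0::'k::linordered_field ratfun)"
  using X2_pos by (metis less_irrefl)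

lemma evalP_eq_sum: "evalP P y = (\<Sum>i\<le>degree P. emb (coeff P i) * y ^ i)"
proof -
  have "degree (map_poly emb P) = degree P"
    by (rule degree_map_poly) (simp add: emb_eq_0_iff)
  then show ?thesis
    unfolding evalP_def poly_altdef by (simp add: coeff_map_poly)
qed

lemma evalP_pos:
  assumes "\<forall>i. coeff P i \<ge> 0" and "coeff P 0 = 1" and "0 < y"
  shows "0 < evalP P (y::'k::linordered_field ratfun)"
proof -
  have "emb (coeff P 0) * y ^ 0 \<le> (\<Sum>i\<le>degree P. emb (coeff P i) * y ^ i)"
    by (rule member_le_sum) (use assms in \<open>auto intro!: mult_nonneg_nonneg emb_nonneg\<close>)
  with assms show ?thesis
    by (simp add: evalP_eq_sum)
qed

lemma coeff_0_palindromic: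
  assumes "lead_coeff P = 1" and "reflect_poly P = P"
  shows "coeff P 0 = 1"
  using assms coeff_reflect_poly[of P 0] by simp

subsection \<open>The cluster variables\<close>

lemma fwd_Suc:
  "fst (fwd P1 P2 (Suc n)) = snd (fwd P1 P2 n)"
  "snd (fwd P1 P2 (Suc n)) = evalP (Pk P1 P2 (int n + 2)) (snd (fwd P1 P2 n)) / fst (fwd P1 P2 n)"
  by (simp_all add: split_beta)

lemma bwd_Suc:
  "snd (bwd P1 P2 (Suc n)) = fst (bwd P1 P2 n)"
  "fst (bwd P1 P2 (Suc n)) = evalP (Pk P1 P2 (1 - int n)) (fst (bwd P1 P2 n)) / snd (bwd P1 P2 n)"
  by (simp_all add: split_beta)

lemma xk_eq_fst_fwd: "xk P1 P2 (int n + 1) = fst (fwd P1 P2 n)"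
  unfolding xk_def by simp

lemma xk_eq_snd_fwd: "xk P1 P2 (int n + 2) = snd (fwd P1 P2 n)"
  using xk_eq_fst_fwd[of P1 P2 "Suc n"] fwd_Suc(1)[of P1 P2 n] by (simp add: add.commute)

lemma xk_eq_fst_bwd: "xk P1 P2 (1 - int n) = fst (bwd P1 P2 n)"
proof (cases n)
  case (Suc m)
  then have "nat (1 + int m) = n"
    by simp
  with Suc show ?thesis
    unfolding xk_def by (simp del: bwd.simps)
qed (simp add: xk_def)

lemma xk_eq_snd_bwd: "xk P1 P2 (2 - int n) = snd (bwd P1 P2 n)"
proof (cases n)
  case 0
  then show ?thesis
    using xk_eq_snd_fwd[of P1 P2 0] by simp
next
  case (Suc m)
  then show ?thesis
    using xk_eq_fst_bwd[of P1 P2 m] bwd_Suc(1)[of P1 P2 m] by simp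
qed

lemma xk_1: "xk P1 P2 1 = X1"
  by (simp add: xk_def)

lemma xk_2: "xk P1 P2 2 = X2"
  by (simp add: xk_def split_beta)

lemma Pk_add_2: "Pk P1 P2 (k + 2) = Pk P1 P2 k"
  unfolding Pk_def by simp

lemma coeff_Pk_in_kk: "coeff (Pk P1 P2 k) i \<in> kk P1 P2"
  unfolding Pk_def by (auto intro: kk.coeff1 kk.coeff2)

locale exchange_polys =
  fixes P1 P2 :: "'k::linordered_field poly"
  assumes lead_coeff_P1: "lead_coeff P1 = 1" and lead_coeff_P2: "lead_coeff P2 = 1"
    and palindromic_P1: "reflect_poly P1 = P1" and palindromic_P2: "reflect_poly P2 = P2"
    and coeff_P1_nonneg: "\<forall>i. coeff P1 i \<ge> 0" and coeff_P2_nonneg: "\<forall>i. coeff P2 i \<ge> 0"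
begin

abbreviation x :: "int \<Rightarrow> 'k ratfun" where
  "x \<equiv> xk P1 P2"

lemma palindromic_Pk: "reflect_poly (Pk P1 P2 k) = Pk P1 P2 k"
  unfolding Pk_def using palindromic_P1 palindromic_P2 by simp

lemma coeff_Pk_nonneg: "\<forall>i. coeff (Pk P1 P2 k) i \<ge> 0"
  unfolding Pk_def using coeff_P1_nonneg coeff_P2_nonneg by simp

lemma coeff_Pk_0: "coeff (Pk P1 P2 k) 0 = 1"
  unfolding Pk_def
  using coeff_0_palindromic[OF lead_coeff_P1 palindromic_P1]
    coeff_0_palindromic[OF lead_coeff_P2 palindromic_P2]
  by simp

lemma fwd_pos: "0 < fst (fwd P1 P2 n) \<and> 0 < snd (fwd P1 P2 n)"
proof (induction n)
  case 0
  then show ?case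
    by (simp add: X1_pos X2_pos)
next
  case (Suc n)
  then show ?case
    by (simp only: fwd_Suc) (auto intro!: divide_pos_pos evalP_pos coeff_Pk_nonneg coeff_Pk_0)
qed

lemma bwd_pos: "0 < fst (bwd P1 P2 n) \<and> 0 < snd (bwd P1 P2 n)"
proof (induction n)
  case 0
  then show ?case
    by (simp add: X1_pos X2_pos)
next
  case (Suc n)
  then show ?case
    by (simp only: bwd_Suc) (auto intro!: divide_pos_pos evalP_pos coeff_Pk_nonneg coeff_Pk_0)
qed

lemma xk_pos: "0 < x k"
  unfolding xk_def using fwd_pos bwd_pos by auto

lemma xk_nonzero: "x k \<noteq> 0"
  using xk_pos[of k] by simp

lemma xk_exchange: "x (k - 1) * x (k + 1) = evalP (Pk P1 P2 k) (x k)"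
proof (cases "k \<ge> 2")
  case True
  define n where "n = nat (k - 2)"
  have k: "k = int n + 2"
    using True n_def by simp
  have "x (k + 1) = snd (fwd P1 P2 (Suc n))"
    using xk_eq_snd_fwd[of P1 P2 "Suc n"] k by (simp add: add.commute add.left_commute)
  moreover have "x (k - 1) = fst (fwd P1 P2 n)"
    using xk_eq_fst_fwd[of P1 P2 n] k by (simp add: add.commute)
  moreover have "x k = snd (fwd P1 P2 n)"
    using xk_eq_snd_fwd[of P1 P2 n] k by simp
  ultimately show ?thesis
    using fwd_pos[of n] by (simp only: fwd_Suc) (simp add: k)
next
  case False
  define n where "n = nat (1 - k)"
  have k: "k = 1 - int n"
    using False n_def by simp
  have "x (k - 1) = fst (bwd P1 P2 (Suc n))"
    using xk_eq_fst_bwd[of P1 P2 "Suc n"] k by simp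
  moreover have "x (k + 1) = snd (bwd P1 P2 n)"
    using xk_eq_snd_bwd[of P1 P2 n] k by simp
  moreover have "x k = fst (bwd P1 P2 n)"
    using xk_eq_fst_bwd[of P1 P2 n] k by simp
  ultimately show ?thesis
    using bwd_pos[of n] by (simp only: bwd_Suc) (simp add: k)
qed

end

subsection \<open>Generation by four consecutive cluster variables\<close>

lemma kk_0: "0 \<in> kk P1 P2"
  using kk.add[OF kk.one kk.neg[OF kk.one]] by simp

inductive_set gen_alg :: "'k::linordered_field poly \<Rightarrow> 'k poly \<Rightarrow> 'k ratfun set \<Rightarrow> 'k ratfun set"
  for P1 P2 G
where
  scal: "c \<in> kk P1 P2 \<Longrightarrow> emb c \<in> gen_alg P1 P2 G"
| gen: "g \<in> G \<Longrightarrow> g \<in> gen_alg P1 P2 G"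
| add: "a \<in> gen_alg P1 P2 G \<Longrightarrow> b \<in> gen_alg P1 P2 G \<Longrightarrow> a + b \<in> gen_alg P1 P2 G"
| mult: "a \<in> gen_alg P1 P2 G \<Longrightarrow> b \<in> gen_alg P1 P2 G \<Longrightarrow> a * b \<in> gen_alg P1 P2 G"

lemma gen_alg_1: "1 \<in> gen_alg P1 P2 G"
  using gen_alg.scal[OF kk.one] by simp

lemma gen_alg_0: "0 \<in> gen_alg P1 P2 G"
  using gen_alg.scal[OF kk_0] by simp

lemma gen_alg_diff: "a \<in> gen_alg P1 P2 G \<Longrightarrow> b \<in> gen_alg P1 P2 G \<Longrightarrow> a - b \<in> gen_alg P1 P2 G"
  using gen_alg.add[OF _ gen_alg.mult[OF gen_alg.scal[OF kk.neg[OF kk.one]]]]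
  by (simp add: emb_uminus)

lemma gen_alg_power: "a \<in> gen_alg P1 P2 G \<Longrightarrow> a ^ n \<in> gen_alg P1 P2 G"
  by (induction n) (auto intro: gen_alg_1 gen_alg.mult)

lemma gen_alg_sum: "(\<And>i. i \<in> S \<Longrightarrow> f i \<in> gen_alg P1 P2 G) \<Longrightarrow> sum f S \<in> gen_alg P1 P2 G"
  by (induction S rule: infinite_finite_induct) (auto intro: gen_alg_0 gen_alg.add)

lemma gen_alg_evalP:
  "a \<in> gen_alg P1 P2 G \<Longrightarrow> \<forall>i. coeff P i \<in> kk P1 P2 \<Longrightarrow> evalP P a \<in> gen_alg P1 P2 G"
  unfolding evalP_eq_sum by (auto intro!: gen_alg_sum gen_alg.mult gen_alg.scal gen_alg_power)

lemma gen_alg_subset: "G' \<subseteq> gen_alg P1 P2 G \<Longrightarrow> gen_alg P1 P2 G' \<subseteq> gen_alg P1 P2 G"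
proof
  fix y
  assume "G' \<subseteq> gen_alg P1 P2 G" and "y \<in> gen_alg P1 P2 G'"
  then show "y \<in> gen_alg P1 P2 G"
    by (induction rule: gen_alg.induct[OF \<open>y \<in> _\<close>]) (auto intro: gen_alg.intros)
qed

text \<open>By palindromicity, \<open>A(w\<^sub>1) w\<^sub>3\<^sup>d = \<Sum> a\<^sub>i w\<^sub>3\<^sup>i (w\<^sub>1w\<^sub>3)\<^sup>d\<^sup>-\<^sup>i\<close>, and
  \<open>w\<^sub>1w\<^sub>3 \<equiv> 1\<close> modulo \<open>w\<^sub>2\<close>; so \<open>w\<^sub>2\<close> divides \<open>A(w\<^sub>3) - A(w\<^sub>1) w\<^sub>3\<^sup>d\<close> with an explicit quotient.\<close>

lemma exchange_identity:
  fixes w0 w1 w2 w3 w4 :: "'k::linordered_field ratfun"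
  assumes e0: "w0 * w2 = evalP A w1" and e1: "w1 * w3 = evalP (pCons 1 B) w2"
    and e2: "w2 * w4 = evalP A w3" and "w2 \<noteq> 0" and "reflect_poly A = A"
  shows "w4 = w0 * w3 ^ degree A - evalP B w2 *
     (\<Sum>i\<le>degree A. emb (coeff A i) * w3 ^ i * (\<Sum>l<degree A - i. (w1 * w3) ^ l))"
proof -
  define d where "d = degree A"
  define p where "p = coeff A"
  define t where "t = w1 * w3"
  define e where "e = evalP B w2"
  have p_rev: "p (d - i) = p i" if "i \<le> d" for i
    using coeff_reflect_poly[of A i] that \<open>reflect_poly A = A\<close> unfolding p_def d_def by simp
  have t: "t = 1 + w2 * e"
    unfolding t_def e_def e1 evalP_def by (simp add: map_poly_pCons)
  have A_sum: "evalP A y = (\<Sum>i\<le>d. emb (p i) * y ^ i)" for y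
    unfolding evalP_eq_sum d_def p_def ..
  have "evalP A w1 * w3 ^ d = (\<Sum>i\<le>d. emb (p i) * w1 ^ i * w3 ^ d)"
    unfolding A_sum by (simp add: sum_distrib_right)
  also have "\<dots> = (\<Sum>i\<le>d. emb (p (d - i)) * w1 ^ (d - i) * w3 ^ d)"
    by (subst sum.atLeastAtMost_rev[of _ 0, simplified atLeast0AtMost]) simp
  also have "\<dots> = (\<Sum>i\<le>d. emb (p i) * w3 ^ i * t ^ (d - i))"
  proof (rule sum.cong[OF refl])
    fix i
    assume "i \<in> {..d}"
    then have "w3 ^ d = w3 ^ i * w3 ^ (d - i)" and "p (d - i) = p i"
      using p_rev by (simp_all add: power_add[symmetric])
    then show "emb (p (d - i)) * w1 ^ (d - i) * w3 ^ d = emb (p i) * w3 ^ i * t ^ (d - i)"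
      by (simp add: t_def power_mult_distrib)
  qed
  finally have "evalP A w3 - evalP A w1 * w3 ^ d = (\<Sum>i\<le>d. emb (p i) * w3 ^ i * (1 - t ^ (d - i)))"
    unfolding A_sum by (simp add: sum_subtractf[symmetric] algebra_simps)
  also have "\<dots> = (\<Sum>i\<le>d. emb (p i) * w3 ^ i * ((1 - t) * (\<Sum>l<d - i. t ^ l)))"
    by (simp add: one_diff_power_eq)
  also have "\<dots> = w2 * (- e * (\<Sum>i\<le>d. emb (p i) * w3 ^ i * (\<Sum>l<d - i. t ^ l)))"
    unfolding t by (simp add: sum_distrib_left algebra_simps)
  finally have "w2 * (w4 - w0 * w3 ^ d) = w2 * (- e * (\<Sum>i\<le>d. emb (p i) * w3 ^ i * (\<Sum>l<d - i. t ^ l)))"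
    using e0 e2 by (simp add: algebra_simps)
  then have "w4 - w0 * w3 ^ d = - e * (\<Sum>i\<le>d. emb (p i) * w3 ^ i * (\<Sum>l<d - i. t ^ l))"
    using \<open>w2 \<noteq> 0\<close> mult_left_cancel by blast
  then show ?thesis
    unfolding d_def p_def t_def e_def by (simp add: algebra_simps)
qed

lemma exchange_in_gen_alg:
  fixes w0 w1 w2 w3 w4 :: "'k::linordered_field ratfun"
  assumes e0: "w0 * w2 = evalP A w1" and e1: "w1 * w3 = evalP B w2"
    and e2: "w2 * w4 = evalP A w3" and "w2 \<noteq> 0" and "reflect_poly A = A"
    and "\<forall>i. coeff A i \<in> kk P1 P2" and "\<forall>i. coeff B i \<in> kk P1 P2" and "coeff B 0 = 1"
    and "w0 \<in> gen_alg P1 P2 G" "w1 \<in> gen_alg P1 P2 G" "w2 \<in> gen_alg P1 P2 G" "w3 \<in> gen_alg P1 P2 G"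
  shows "w4 \<in> gen_alg P1 P2 G"
proof -
  obtain B' where B: "B = pCons 1 B'"
    using \<open>coeff B 0 = 1\<close> by (cases B) simp
  then have "\<forall>i. coeff B' i \<in> kk P1 P2"
    using \<open>\<forall>i. coeff B i \<in> kk P1 P2\<close> by (metis coeff_pCons_Suc)
  moreover have "w4 = w0 * w3 ^ degree A - evalP B' w2 *
     (\<Sum>i\<le>degree A. emb (coeff A i) * w3 ^ i * (\<Sum>l<degree A - i. (w1 * w3) ^ l))"
    using exchange_identity[OF e0 _ e2] e1 B assms(4,5) by simp
  ultimately show ?thesis
    using assms by (auto intro!: gen_alg_diff gen_alg.mult gen_alg_power gen_alg_evalP gen_alg_sum gen_alg.scal)
qed

context exchange_polys
begin

definition window :: "int \<Rightarrow> 'k ratfun set" where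
  "window j = {x j, x (j + 1), x (j + 2), x (j + 3)}"

lemma xk_exchange_at:
  "a = k - 1 \<Longrightarrow> b = k + 1 \<Longrightarrow> x a * x b = evalP (Pk P1 P2 k) (x k)"
  using xk_exchange by simp

lemma xk_forward_in_window: "x (j + 4) \<in> gen_alg P1 P2 (window j)"
proof (rule exchange_in_gen_alg[where A = "Pk P1 P2 (j + 1)" and B = "Pk P1 P2 (j + 2)"])
  show "x j * x (j + 2) = evalP (Pk P1 P2 (j + 1)) (x (j + 1))"
    "x (j + 1) * x (j + 3) = evalP (Pk P1 P2 (j + 2)) (x (j + 2))"
    by (rule xk_exchange_at; simp)+
  show "x (j + 2) * x (j + 4) = evalP (Pk P1 P2 (j + 1)) (x (j + 3))"
    using xk_exchange_at[of "j + 2" "j + 3" "j + 4"] Pk_add_2[of P1 P2 "j + 1"] by (simp add: add.assoc)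
qed (auto simp: window_def xk_nonzero palindromic_Pk coeff_Pk_in_kk coeff_Pk_0 intro: gen_alg.gen)

lemma xk_backward_in_window: "x j \<in> gen_alg P1 P2 (window (j + 1))"
proof (rule exchange_in_gen_alg[where A = "Pk P1 P2 (j + 3)" and B = "Pk P1 P2 (j + 2)"
      and ?w1.0 = "x (j + 3)" and ?w3.0 = "x (j + 1)"])
  show "x (j + 4) * x (j + 2) = evalP (Pk P1 P2 (j + 3)) (x (j + 3))"
    "x (j + 3) * x (j + 1) = evalP (Pk P1 P2 (j + 2)) (x (j + 2))"
    by (subst mult.commute, rule xk_exchange_at; simp)+
  show "x (j + 2) * x j = evalP (Pk P1 P2 (j + 3)) (x (j + 1))"
    using xk_exchange_at[of j "j + 1" "j + 2"] Pk_add_2[of P1 P2 "j + 1"] by (simp add: add.assoc mult.commute)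
qed (auto simp: window_def xk_nonzero palindromic_Pk coeff_Pk_in_kk coeff_Pk_0 add.assoc intro: gen_alg.gen)

lemma gen_alg_window_shift: "gen_alg P1 P2 (window (j + 1)) = gen_alg P1 P2 (window j)"
proof
  show "gen_alg P1 P2 (window (j + 1)) \<subseteq> gen_alg P1 P2 (window j)"
    by (rule gen_alg_subset)
      (use xk_forward_in_window[of j] in \<open>auto simp: window_def add.assoc intro: gen_alg.gen\<close>)
  show "gen_alg P1 P2 (window j) \<subseteq> gen_alg P1 P2 (window (j + 1))"
    by (rule gen_alg_subset)
      (use xk_backward_in_window[of j] in \<open>auto simp: window_def add.assoc intro: gen_alg.gen\<close>)
qed

lemma gen_alg_window: "gen_alg P1 P2 (window j) = gen_alg P1 P2 (window 0)"
proof (induction j rule: int_induct[where k = 0])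
  case (step1 i)
  then show ?case
    using gen_alg_window_shift[of i] by simp
next
  case (step2 i)
  then show ?case
    using gen_alg_window_shift[of "i - 1"] by simp
qed simp

lemma clalg_subset_gen_alg_window: "clalg P1 P2 \<subseteq> gen_alg P1 P2 (window 0)"
proof
  have xk_in: "x k \<in> gen_alg P1 P2 (window 0)" for k
    using gen_alg_window[of k] gen_alg.gen[of "x k" "window k" P1 P2] by (simp add: window_def)
  show "y \<in> gen_alg P1 P2 (window 0)" if "y \<in> clalg P1 P2" for y
    using that by (induction rule: clalg.induct) (auto intro: gen_alg.intros xk_in)
qed

end

subsection \<open>Spanning by the standard monomials\<close>

definition kspan :: "'k::linordered_field poly \<Rightarrow> 'k poly \<Rightarrow> ('i \<Rightarrow> 'k ratfun) \<Rightarrow> 'k ratfun set" where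
  "kspan P1 P2 F =
     {y. \<exists>S c. finite S \<and> (\<forall>i\<in>S. c i \<in> kk P1 P2) \<and> y = (\<Sum>i\<in>S. emb (c i) * F i)}"

lemma kspanI:
  "finite S \<Longrightarrow> \<forall>i\<in>S. c i \<in> kk P1 P2 \<Longrightarrow> y = (\<Sum>i\<in>S. emb (c i) * F i) \<Longrightarrow> y \<in> kspan P1 P2 F"
  unfolding kspan_def by blast

lemma kspanE:
  assumes "y \<in> kspan P1 P2 F"
  obtains S c where "finite S" "\<forall>i\<in>S. c i \<in> kk P1 P2" "y = (\<Sum>i\<in>S. emb (c i) * F i)"
  using assms unfolding kspan_def by blast

lemma kspan_0: "0 \<in> kspan P1 P2 F"
  by (rule kspanI[of "{}"]) auto

lemma kspan_gen: "F i \<in> kspan P1 P2 F"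
  by (rule kspanI[of "{i}" "\<lambda>_. 1"]) (auto intro: kk.one)

lemma kspan_add:
  assumes "u \<in> kspan P1 P2 F" and "v \<in> kspan P1 P2 F"
  shows "u + v \<in> kspan P1 P2 F"
proof -
  obtain S c where S: "finite S" "\<forall>i\<in>S. c i \<in> kk P1 P2" "u = (\<Sum>i\<in>S. emb (c i) * F i)"
    using assms(1) by (rule kspanE)
  obtain T d where T: "finite T" "\<forall>i\<in>T. d i \<in> kk P1 P2" "v = (\<Sum>i\<in>T. emb (d i) * F i)"
    using assms(2) by (rule kspanE)
  define c' where "c' i = (if i \<in> S then c i else 0)" for i
  define d' where "d' i = (if i \<in> T then d i else 0)" for i
  have "u = (\<Sum>i\<in>S \<union> T. emb (c' i) * F i)"
    unfolding S(3) c'_def by (rule sum.mono_neutral_cong_left) (use S T in auto)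
  moreover have "v = (\<Sum>i\<in>S \<union> T. emb (d' i) * F i)"
    unfolding T(3) d'_def by (rule sum.mono_neutral_cong_left) (use S T in auto)
  ultimately have "u + v = (\<Sum>i\<in>S \<union> T. emb (c' i + d' i) * F i)"
    by (simp add: emb_add sum.distrib distrib_right)
  moreover have "\<forall>i\<in>S \<union> T. c' i + d' i \<in> kk P1 P2"
    using S T by (auto simp: c'_def d'_def intro: kk.add kk_0)
  ultimately show ?thesis
    using S T by (intro kspanI[of "S \<union> T"]) auto
qed

lemma kspan_smult:
  assumes "a \<in> kk P1 P2" and "u \<in> kspan P1 P2 F"
  shows "emb a * u \<in> kspan P1 P2 F"
proof -
  obtain S c where S: "finite S" "\<forall>i\<in>S. c i \<in> kk P1 P2" "u = (\<Sum>i\<in>S. emb (c i) * F i)"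
    using assms(2) by (rule kspanE)
  show ?thesis
    by (rule kspanI[of S "\<lambda>i. a * c i"])
      (use S assms(1) in \<open>auto simp: sum_distrib_left emb_mult mult.assoc intro: kk.mult\<close>)
qed

lemma kspan_diff: "u \<in> kspan P1 P2 F \<Longrightarrow> v \<in> kspan P1 P2 F \<Longrightarrow> u - v \<in> kspan P1 P2 F"
  using kspan_add[OF _ kspan_smult[OF kk.neg[OF kk.one]]] by (simp add: emb_uminus)

lemma kspan_sum: "(\<And>i. i \<in> S \<Longrightarrow> f i \<in> kspan P1 P2 F) \<Longrightarrow> sum f S \<in> kspan P1 P2 F"
  by (induction S rule: infinite_finite_induct) (auto intro: kspan_0 kspan_add)

lemma kspan_subset:
  assumes "\<And>i. F i \<in> kspan P1 P2 G"
  shows "kspan P1 P2 F \<subseteq> kspan P1 P2 G"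
proof
  fix y
  assume "y \<in> kspan P1 P2 F"
  then obtain S c where S: "finite S" "\<forall>i\<in>S. c i \<in> kk P1 P2" "y = (\<Sum>i\<in>S. emb (c i) * F i)"
    by (rule kspanE)
  show "y \<in> kspan P1 P2 G"
    unfolding S(3) using S(2) assms by (auto intro: kspan_sum kspan_smult)
qed

lemma kspan_mult:
  assumes "\<And>i j. F i * F j \<in> kspan P1 P2 F"
    and "u \<in> kspan P1 P2 F" and "v \<in> kspan P1 P2 F"
  shows "u * v \<in> kspan P1 P2 F"
proof -
  obtain S c where S: "finite S" "\<forall>i\<in>S. c i \<in> kk P1 P2" "u = (\<Sum>i\<in>S. emb (c i) * F i)"
    using assms(2) by (rule kspanE)
  obtain T d where T: "finite T" "\<forall>i\<in>T. d i \<in> kk P1 P2" "v = (\<Sum>i\<in>T. emb (d i) * F i)"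
    using assms(3) by (rule kspanE)
  have "u * v = (\<Sum>i\<in>S. \<Sum>j\<in>T. emb (c i * d j) * (F i * F j))"
    unfolding S(3) T(3) sum_product by (simp add: emb_mult algebra_simps)
  also have "\<dots> \<in> kspan P1 P2 F"
    using S(2) T(2) assms(1) by (auto intro!: kspan_sum kspan_smult kk.mult)
  finally show ?thesis .
qed

context exchange_polys
begin

definition std_mon :: "int \<times> int \<Rightarrow> 'k ratfun" where
  "std_mon a = z1 P1 P2 (fst a) (snd a)"

definition monomial4 :: "nat \<Rightarrow> nat \<Rightarrow> nat \<Rightarrow> nat \<Rightarrow> 'k ratfun" where
  "monomial4 a b c d = x 0 ^ a * x 1 ^ b * x 2 ^ c * x 3 ^ d"

lemma std_mon_eq_monomial4:
  "std_mon a = monomial4 (nat (snd a)) (nat (- fst a)) (nat (- snd a)) (nat (fst a))"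
  unfolding std_mon_def z1_def monomial4_def ..

lemma monomial4_mult:
  "monomial4 a b c d * monomial4 a' b' c' d' = monomial4 (a + a') (b + b') (c + c') (d + d')"
  unfolding monomial4_def by (simp add: power_add algebra_simps)

lemma monomial4_eq_std_mon:
  "a * c = 0 \<Longrightarrow> b * d = 0 \<Longrightarrow> monomial4 a b c d = std_mon (int d - int b, int a - int c)"
  unfolding std_mon_eq_monomial4 by auto

text \<open>Rewriting \<open>x\<^sub>0x\<^sub>2 = P\<^sub>1(x\<^sub>1)\<close> and \<open>x\<^sub>1x\<^sub>3 = P\<^sub>2(x\<^sub>2)\<close> lowers the total exponent of
  \<open>x\<^sub>0\<close> and \<open>x\<^sub>3\<close> until no forbidden pair remains.\<close>

lemma monomial4_in_kspan: "monomial4 a b c d \<in> kspan P1 P2 std_mon"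
proof (induction "a + d" arbitrary: a b c d rule: less_induct)
  case less
  consider (x0x2) a' c' where "a = Suc a'" "c = Suc c'"
    | (x1x3) b' d' where "b = Suc b'" "d = Suc d'"
    | (standard) "a * c = 0" "b * d = 0"
    by (metis mult_is_0 not0_implies_Suc)
  then show ?case
  proof cases
    case x0x2
    have "monomial4 a b c d = (x 0 * x 2) * monomial4 a' b c' d"
      unfolding x0x2 monomial4_def by (simp add: algebra_simps)
    also have "\<dots> = (\<Sum>i\<le>degree (Pk P1 P2 1). emb (coeff (Pk P1 P2 1) i) * monomial4 a' (b + i) c' d)"
      unfolding xk_exchange_at[of 0 1 2, simplified] evalP_eq_sum sum_distrib_right
      by (rule sum.cong) (auto simp: monomial4_def power_add algebra_simps)
    also have "\<dots> \<in> kspan P1 P2 std_mon"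
      using x0x2 by (auto intro!: kspan_sum kspan_smult coeff_Pk_in_kk less)
    finally show ?thesis .
  next
    case x1x3
    have "monomial4 a b c d = (x 1 * x 3) * monomial4 a b' c d'"
      unfolding x1x3 monomial4_def by (simp add: algebra_simps)
    also have "\<dots> = (\<Sum>i\<le>degree (Pk P1 P2 2). emb (coeff (Pk P1 P2 2) i) * monomial4 a b' (c + i) d')"
      unfolding xk_exchange_at[of 1 2 3, simplified] evalP_eq_sum sum_distrib_right
      by (rule sum.cong) (auto simp: monomial4_def power_add algebra_simps)
    also have "\<dots> \<in> kspan P1 P2 std_mon"
      using x1x3 by (auto intro!: kspan_sum kspan_smult coeff_Pk_in_kk less)
    finally show ?thesis .
  next
    case standard
    then show ?thesis
      by (simp add: monomial4_eq_std_mon kspan_gen)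
  qed
qed

lemma std_mon_mult_in_kspan: "std_mon a * std_mon b \<in> kspan P1 P2 std_mon"
proof -
  have "std_mon a * std_mon b = monomial4 (nat (snd a) + nat (snd b)) (nat (- fst a) + nat (- fst b))
      (nat (- snd a) + nat (- snd b)) (nat (fst a) + nat (fst b))"
    by (simp only: std_mon_eq_monomial4 monomial4_mult)
  then show ?thesis
    using monomial4_in_kspan by simp
qed

lemma clalg_subset_kspan_std_mon: "clalg P1 P2 \<subseteq> kspan P1 P2 std_mon"
proof -
  have "y \<in> kspan P1 P2 std_mon" if "y \<in> gen_alg P1 P2 (window 0)" for y
    using that
  proof (induction rule: gen_alg.induct)
    case (scal c)
    have "std_mon (0, 0) = 1"
      by (simp add: std_mon_def z1_def)
    then show ?case
      using kspan_smult[OF scal kspan_gen[of std_mon "(0, 0)"]] by simp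
  next
    case (gen g)
    have "x 0 = std_mon (0, 1)" "x 1 = std_mon (-1, 0)" "x 2 = std_mon (0, -1)" "x 3 = std_mon (1, 0)"
      unfolding std_mon_def z1_def by simp_all
    with gen show ?case
      by (auto simp: window_def kspan_gen)
  qed (auto intro: kspan_add kspan_mult std_mon_mult_in_kspan)
  then show ?thesis
    using clalg_subset_gen_alg_window by blast
qed

end

subsection \<open>Laurent coefficients\<close>

definition bicoeff :: "'k::zero poly poly \<Rightarrow> int \<times> int \<Rightarrow> 'k" where
  "bicoeff f m = (if 0 \<le> fst m \<and> 0 \<le> snd m then coeff (coeff f (nat (snd m))) (nat (fst m)) else 0)"

definition shift_bipoly :: "nat \<Rightarrow> nat \<Rightarrow> 'k::comm_ring_1 poly poly \<Rightarrow> 'k poly poly" where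
  "shift_bipoly s t f = smult (monom 1 s) (monom 1 t * f)"

definition laurent :: "int \<times> int \<Rightarrow> 'k::linordered_field poly poly \<Rightarrow> 'k ratfun" where
  "laurent a f = X1 powi (- fst a) * X2 powi (- snd a) * Fract f 1"

lemma bicoeff_add: "bicoeff (f + g) m = bicoeff f m + bicoeff g m"
  by (simp add: bicoeff_def)

lemma bicoeff_shift_bipoly: "bicoeff (shift_bipoly s t f) m = bicoeff f (m - (int s, int t))"
proof (cases "0 \<le> fst m \<and> 0 \<le> snd m")
  case True
  then obtain i j where "m = (int i, int j)"
    by (metis nonneg_int_cases prod.collapse)
  then show ?thesis
    unfolding bicoeff_def shift_bipoly_def by (auto simp: coeff_monom_mult nat_diff_distrib not_less)
qed (auto simp: bicoeff_def)

lemma Fract_power: "Fract (a::'a::idom) 1 ^ n = Fract (a ^ n) 1"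
  by (induction n) (simp_all add: One_fract_def)

lemma X1_X2_power_mult_Fract:
  "X1 ^ s * X2 ^ t * Fract f 1 = (Fract (shift_bipoly s t f) 1 :: 'k::linordered_field ratfun)"
proof -
  have "X1 ^ s = (Fract [:monom 1 s:] 1 :: 'k ratfun)" and "X2 ^ t = (Fract (monom 1 t) 1 :: 'k ratfun)"
    unfolding X1_def X2_def Fract_power poly_const_pow monom_altdef by simp_all
  then show ?thesis
    by (simp add: shift_bipoly_def mult.assoc)
qed

lemma laurent_shift: "laurent a f = laurent (a + (int s, int t)) (shift_bipoly s t f)"
proof -
  define a' where "a' = a + (int s, int t)"
  have X1_powi: "X1 powi (- fst a) = X1 powi (- fst a') * X1 ^ s"
    using power_int_add[of X1 "- fst a'" "int s"] by (simp add: a'_def X1_nonzero)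
  have X2_powi: "X2 powi (- snd a) = X2 powi (- snd a') * X2 ^ t"
    using power_int_add[of X2 "- snd a'" "int t"] by (simp add: a'_def X2_nonzero)
  have "laurent a f = X1 powi (- fst a') * X2 powi (- snd a') * (X1 ^ s * X2 ^ t * Fract f 1)"
    unfolding laurent_def X1_powi X2_powi by (simp add: ac_simps)
  then show ?thesis
    unfolding X1_X2_power_mult_Fract laurent_def a'_def .
qed

lemma laurent_common_shift:
  obtains c s t s' t' where "a + (int s, int t) = c" and "a' + (int s', int t') = c"
proof
  show "a + (int (nat (max (fst a) (fst a') - fst a)), int (nat (max (snd a) (snd a') - snd a)))
      = (max (fst a) (fst a'), max (snd a) (snd a'))"
    and "a' + (int (nat (max (fst a) (fst a') - fst a')), int (nat (max (snd a) (snd a') - snd a')))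
      = (max (fst a) (fst a'), max (snd a) (snd a'))"
    by (simp_all add: prod_eq_iff)
qed

lemma laurent_eq_imp_bicoeff_eq:
  assumes "laurent a f = laurent a' f'"
  shows "bicoeff f (a - b) = bicoeff f' (a' - b)"
proof -
  obtain c s t s' t' where c: "a + (int s, int t) = c" "a' + (int s', int t') = c"
    by (rule laurent_common_shift)
  have "laurent c (shift_bipoly s t f) = laurent c (shift_bipoly s' t' f')"
    using assms laurent_shift[of a f s t] laurent_shift[of a' f' s' t'] c by simp
  then have "shift_bipoly s t f = shift_bipoly s' t' f'"
    unfolding laurent_def by (simp add: X1_nonzero X2_nonzero eq_fract)
  then have "bicoeff f (c - b - (int s, int t)) = bicoeff f' (c - b - (int s', int t'))"
    by (metis bicoeff_shift_bipoly)
  moreover have "c - b - (int s, int t) = a - b" and "c - b - (int s', int t') = a' - b"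
    using c by (auto simp: prod_eq_iff)
  ultimately show ?thesis
    by simp
qed

text \<open>\<open>laurent_coeff r b\<close> is the coefficient of \<open>x\<^sub>1\<^sup>-\<^sup>b\<^sup>1 x\<^sub>2\<^sup>-\<^sup>b\<^sup>2\<close>; it is meaningful only
  when \<open>is_laurent r\<close>.\<close>

definition laurent_coeff :: "'k::linordered_field ratfun \<Rightarrow> int \<times> int \<Rightarrow> 'k" where
  "laurent_coeff r b = (THE v. \<exists>a f. r = laurent a f \<and> v = bicoeff f (a - b))"

definition is_laurent :: "'k::linordered_field ratfun \<Rightarrow> bool" where
  "is_laurent r \<longleftrightarrow> (\<exists>a f. r = laurent a f)"

lemma laurent_coeff_laurent: "laurent_coeff (laurent a f) b = bicoeff f (a - b)"
  unfolding laurent_coeff_def by (rule the_equality) (blast, metis laurent_eq_imp_bicoeff_eq)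

lemma laurent_0: "0 = laurent 0 0"
  by (simp add: laurent_def Zero_fract_def)

lemma is_laurent_0: "is_laurent 0"
  unfolding is_laurent_def using laurent_0 by blast

lemma laurent_coeff_0: "laurent_coeff 0 b = 0"
  by (subst laurent_0) (simp add: laurent_coeff_laurent bicoeff_def)

lemma laurent_common_exponent:
  assumes "is_laurent r" and "is_laurent q"
  obtains a f g where "r = laurent a f" and "q = laurent a g"
proof -
  obtain a f a' f' where "r = laurent a f" "q = laurent a' f'"
    using assms unfolding is_laurent_def by blast
  moreover obtain c s t s' t' where "a + (int s, int t) = c" "a' + (int s', int t') = c"
    by (rule laurent_common_shift)
  ultimately show ?thesis
    using that laurent_shift by metis
qed

lemma laurent_add:
  fixes f g :: "'k::linordered_field poly poly"
  shows "laurent a f + laurent a g = laurent a (f + g)"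
proof -
  have "Fract f 1 + Fract g 1 = (Fract (f + g) 1 :: 'k::linordered_field ratfun)"
    by simp
  then show ?thesis
    unfolding laurent_def by (metis distrib_left)
qed

lemma laurent_diff:
  fixes f g :: "'k::linordered_field poly poly"
  shows "laurent a f - laurent a g = laurent a (f - g)"
proof -
  have "Fract f 1 - Fract g 1 = (Fract (f - g) 1 :: 'k::linordered_field ratfun)"
    by simp
  then show ?thesis
    unfolding laurent_def by (metis right_diff_distrib)
qed

lemma laurent_mult: "laurent a f * laurent b g = laurent (a + b) (f * g)"
proof -
  have X1_powi: "X1 powi (- fst (a + b)) = X1 powi (- fst a) * X1 powi (- fst b)"
    and X2_powi: "X2 powi (- snd (a + b)) = X2 powi (- snd a) * X2 powi (- snd b)"
    by (simp_all add: power_int_add[symmetric] X1_nonzero X2_nonzero)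
  show ?thesis
    unfolding laurent_def X1_powi X2_powi by (simp add: ac_simps)
qed

lemma emb_mult_laurent: "emb c * laurent a f = laurent a (smult [:c:] f)"
  unfolding laurent_def emb_def by (simp add: ac_simps)

lemma is_laurent_add: "is_laurent r \<Longrightarrow> is_laurent q \<Longrightarrow> is_laurent (r + q)"
  by (erule laurent_common_exponent, assumption) (auto simp: is_laurent_def laurent_add)

lemma laurent_coeff_add:
  "is_laurent r \<Longrightarrow> is_laurent q \<Longrightarrow> laurent_coeff (r + q) b = laurent_coeff r b + laurent_coeff q b"
  by (erule laurent_common_exponent, assumption) (simp add: laurent_add laurent_coeff_laurent bicoeff_add)

lemma is_laurent_emb_mult: "is_laurent r \<Longrightarrow> is_laurent (emb c * r)"
  unfolding is_laurent_def by (metis emb_mult_laurent)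

lemma laurent_coeff_emb_mult: "is_laurent r \<Longrightarrow> laurent_coeff (emb c * r) b = c * laurent_coeff r b"
  by (auto simp: is_laurent_def emb_mult_laurent laurent_coeff_laurent bicoeff_def)

lemma is_laurent_lincomb: "(\<And>i. i \<in> S \<Longrightarrow> is_laurent (F i)) \<Longrightarrow> is_laurent (\<Sum>i\<in>S. emb (c i) * F i)"
  by (induction S rule: infinite_finite_induct) (auto intro: is_laurent_0 is_laurent_add is_laurent_emb_mult)

lemma laurent_coeff_lincomb:
  "(\<And>i. i \<in> S \<Longrightarrow> is_laurent (F i)) \<Longrightarrow>
    laurent_coeff (\<Sum>i\<in>S. emb (c i) * F i) b = (\<Sum>i\<in>S. c i * laurent_coeff (F i) b)"
  by (induction S rule: infinite_finite_induct)
    (auto simp: laurent_coeff_0 laurent_coeff_add laurent_coeff_emb_mult is_laurent_emb_mult is_laurent_lincomb)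

definition pointed_laurent :: "'k::linordered_field ratfun \<Rightarrow> int \<times> int \<Rightarrow> bool" where
  "pointed_laurent r a \<longleftrightarrow> (\<exists>f. bicoeff f (0, 0) = 1 \<and> r = laurent a f)"

lemma pointed_laurent_is_laurent: "pointed_laurent r a \<Longrightarrow> is_laurent r"
  unfolding pointed_laurent_def is_laurent_def by blast

lemma pointed_laurent_1: "pointed_laurent 1 (0, 0)"
  unfolding pointed_laurent_def laurent_def
  by (rule exI[of _ 1]) (simp add: One_fract_def bicoeff_def)

lemma pointed_laurent_mult:
  assumes "pointed_laurent r a" and "pointed_laurent q b"
  shows "pointed_laurent (r * q) (a + b)"
proof -
  obtain f g where "bicoeff f (0, 0) = 1" "r = laurent a f" "bicoeff g (0, 0) = 1" "q = laurent b g"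
    using assms unfolding pointed_laurent_def by blast
  then show ?thesis
    unfolding pointed_laurent_def
    by (intro exI[of _ "f * g"]) (simp add: laurent_mult bicoeff_def coeff_mult_0)
qed

lemma pointed_laurent_power:
  "pointed_laurent r (a1, a2) \<Longrightarrow> pointed_laurent (r ^ n) (int n * a1, int n * a2)"
proof (induction n)
  case 0
  then show ?case
    using pointed_laurent_1 by simp
next
  case (Suc n)
  then show ?case
    using pointed_laurent_mult[OF Suc.prems Suc.IH[OF Suc.prems]] by (simp add: algebra_simps)
qed

lemma laurent_coeff_pointed_self: "pointed_laurent r a \<Longrightarrow> laurent_coeff r a = 1"
  unfolding pointed_laurent_def by (auto simp: laurent_coeff_laurent zero_prod_def)

lemma laurent_coeff_pointed_outside: "pointed_laurent r a \<Longrightarrow> \<not> b \<le> a \<Longrightarrow> laurent_coeff r b = 0"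
  unfolding pointed_laurent_def by (auto simp: laurent_coeff_laurent bicoeff_def less_eq_prod_def)

lemma laurent_coeff_pointed_diff:
  assumes "pointed_laurent r a" and "pointed_laurent q a" and "\<not> b < a"
  shows "laurent_coeff (r - q) b = 0"
proof -
  obtain f g where "bicoeff f (0, 0) = 1" "r = laurent a f" "bicoeff g (0, 0) = 1" "q = laurent a g"
    using assms(1,2) unfolding pointed_laurent_def by blast
  with assms(3) show ?thesis
    by (auto simp: laurent_diff laurent_coeff_laurent bicoeff_def less_prod_def less_eq_prod_def)
qed

lemma laurent_coeff_lincomb_maximal:
  assumes pointed: "\<And>b. pointed_laurent (F b) b" and "finite S" and "b \<in> S"
    and maximal: "\<And>b'. b' \<in> S \<Longrightarrow> c b' \<noteq> 0 \<Longrightarrow> b \<le> b' \<Longrightarrow> b' = b"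
  shows "laurent_coeff (\<Sum>i\<in>S. emb (c i) * F i) b = c b"
proof -
  have "laurent_coeff (\<Sum>i\<in>S. emb (c i) * F i) b = (\<Sum>i\<in>S. c i * laurent_coeff (F i) b)"
    using pointed pointed_laurent_is_laurent by (blast intro: laurent_coeff_lincomb)
  also have "\<dots> = c b * laurent_coeff (F b) b + (\<Sum>i\<in>S - {b}. c i * laurent_coeff (F i) b)"
    using \<open>finite S\<close> \<open>b \<in> S\<close> by (simp add: sum.remove)
  also have "(\<Sum>i\<in>S - {b}. c i * laurent_coeff (F i) b) = 0"
  proof (rule sum.neutral, rule ballI)
    fix i
    assume "i \<in> S - {b}"
    show "c i * laurent_coeff (F i) b = 0"
    proof (cases "c i = 0")
      case False
      with \<open>i \<in> S - {b}\<close> have "\<not> b \<le> i"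
        using maximal by blast
      then show ?thesis
        using laurent_coeff_pointed_outside[OF pointed] by simp
    qed simp
  qed
  finally show ?thesis
    using laurent_coeff_pointed_self[OF pointed] by simp
qed

lemma pointed_lincomb_support_below:
  assumes pointed: "\<And>b. pointed_laurent (F b) b" and "finite S"
    and below: "\<And>b. \<not> b < a \<Longrightarrow> laurent_coeff (\<Sum>i\<in>S. emb (c i) * F i) b = 0"
    and "i \<in> S" and "c i \<noteq> 0"
  shows "i < a"
proof -
  define T where "T = {j \<in> S. c j \<noteq> 0 \<and> i \<le> j}"
  have "finite T"
    using \<open>finite S\<close> by (simp add: T_def)
  moreover have "T \<noteq> {}"
    using \<open>i \<in> S\<close> \<open>c i \<noteq> 0\<close> unfolding T_def by blast
  ultimately obtain m where "m \<in> T" and m_max: "\<And>b. b \<in> T \<Longrightarrow> m \<le> b \<Longrightarrow> m = b"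
    by (meson finite_has_maximal)
  then have m: "m \<in> S" "c m \<noteq> 0" "i \<le> m"
    by (simp_all add: T_def)
  have coeff_m: "laurent_coeff (\<Sum>j\<in>S. emb (c j) * F j) m = c m"
  proof (rule laurent_coeff_lincomb_maximal[OF pointed \<open>finite S\<close> \<open>m \<in> S\<close>])
    fix b
    assume "b \<in> S" "c b \<noteq> 0" "m \<le> b"
    moreover have "i \<le> b"
      using \<open>i \<le> m\<close> \<open>m \<le> b\<close> by (rule order_trans)
    ultimately show "b = m"
      using m_max[of b] by (simp add: T_def)
  qed
  have "m < a"
  proof (rule ccontr)
    assume "\<not> m < a"
    then show False
      using below[of m] coeff_m \<open>c m \<noteq> 0\<close> by simp
  qed
  with \<open>i \<le> m\<close> show "i < a"
    by (rule le_less_trans)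
qed

lemma pointed_lincomb_eq_0:
  assumes "\<And>b. pointed_laurent (F b) b" and "finite S"
    and "(\<Sum>i\<in>S. emb (c i) * F i) = 0" and "i \<in> S"
  shows "c i = 0"
proof (rule ccontr)
  assume "c i \<noteq> 0"
  have "i < i"
    using pointed_lincomb_support_below[OF assms(1,2), of i c i] assms(3,4) \<open>c i \<noteq> 0\<close>
    by (simp add: laurent_coeff_0)
  then show False
    by simp
qed

lemma evalP_X1: "evalP P X1 = (Fract [:P:] 1 :: 'k::linordered_field ratfun)"
proof (induction P)
  case (pCons a p)
  have "evalP (pCons a p) X1 = emb a + X1 * evalP p X1"
    unfolding evalP_def by (simp add: map_poly_pCons)
  also have "\<dots> = Fract [:pCons a p:] 1"
    unfolding pCons.IH unfolding emb_def X1_def by simp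
  finally show ?case .
qed (simp add: evalP_def Zero_fract_def)

lemma evalP_X2: "evalP P X2 = (Fract (map_poly (\<lambda>c. [:c:]) P) 1 :: 'k::linordered_field ratfun)"
proof (induction P)
  case (pCons a p)
  have "evalP (pCons a p) X2 = emb a + X2 * evalP p X2"
    unfolding evalP_def by (simp add: map_poly_pCons)
  also have "\<dots> = Fract (map_poly (\<lambda>c. [:c:]) (pCons a p)) 1"
    unfolding pCons.IH unfolding emb_def X2_def by (simp add: map_poly_pCons)
  finally show ?case .
qed (simp add: evalP_def Zero_fract_def)

lemma Fract_sum: "(Fract (sum f A) 1 :: 'a::idom fract) = (\<Sum>a\<in>A. Fract (f a) 1)"
proof (induction A rule: infinite_finite_induct)
  case (insert a A)
  have "Fract (f a + sum f A) 1 = Fract (f a) 1 + (Fract (sum f A) 1 :: 'a fract)"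
    by simp
  with insert show ?case
    by simp
qed (simp_all add: Zero_fract_def)

lemma pointed_imp_pointed_laurent: "pointed P1 P2 r a1 a2 \<Longrightarrow> pointed_laurent r (a1, a2)"
proof -
  assume "pointed P1 P2 r a1 a2"
  then obtain c :: "nat \<Rightarrow> nat \<Rightarrow> 'a" and N where "c 0 0 = 1"
    and r: "r = X1 powi (- a1) * X2 powi (- a2) * (\<Sum>p\<le>N. \<Sum>q\<le>N. emb (c p q) * X1 ^ p * X2 ^ q)"
    unfolding pointed_def by blast
  define g where "g = (\<Sum>p\<le>N. \<Sum>q\<le>N. [:[:c p q:]:] * [:[:0, 1:]:] ^ p * [:0, 1:] ^ q)"
  have "(\<Sum>p\<le>N. \<Sum>q\<le>N. emb (c p q) * X1 ^ p * X2 ^ q) = (Fract g 1 :: 'a ratfun)"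
    unfolding g_def Fract_sum emb_def X1_def X2_def Fract_power by simp
  then have "r = laurent (a1, a2) g"
    unfolding r laurent_def by simp
  moreover have "bicoeff g (0, 0) = c 0 0"
    by (simp add: g_def bicoeff_def coeff_sum poly_0_coeff_0[symmetric] poly_sum power_0_left
        if_distrib[of "(*) _"] sum.delta cong: if_cong)
  ultimately show ?thesis
    unfolding pointed_laurent_def using \<open>c 0 0 = 1\<close> by auto
qed

context exchange_polys
begin

lemma pointed_laurent_x0: "pointed_laurent (x 0) (0, 1)"
proof -
  have "x 0 * X2 = evalP (Pk P1 P2 1) X1"
    using xk_exchange_at[of 0 1 2] by (simp add: xk_1 xk_2)
  then have "x 0 = laurent (0, 1) [:Pk P1 P2 1:]"
    unfolding laurent_def evalP_X1 using X2_nonzero[where 'k = 'k] by (simp add: power_int_minus field_simps)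
  then show ?thesis
    unfolding pointed_laurent_def by (intro exI[of _ "[:Pk P1 P2 1:]"]) (simp add: bicoeff_def coeff_Pk_0)
qed

lemma pointed_laurent_x1: "pointed_laurent (x 1) (-1, 0)"
  unfolding pointed_laurent_def laurent_def xk_1
  by (rule exI[of _ 1]) (simp add: One_fract_def bicoeff_def)

lemma pointed_laurent_x2: "pointed_laurent (x 2) (0, -1)"
  unfolding pointed_laurent_def laurent_def xk_2
  by (rule exI[of _ 1]) (simp add: One_fract_def bicoeff_def)

lemma pointed_laurent_x3: "pointed_laurent (x 3) (1, 0)"
proof -
  have "X1 * x 3 = evalP (Pk P1 P2 2) X2"
    using xk_exchange_at[of 1 2 3] by (simp add: xk_1 xk_2)
  then have "x 3 = laurent (1, 0) (map_poly (\<lambda>c. [:c:]) (Pk P1 P2 2))"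
    unfolding laurent_def evalP_X2 using X1_nonzero[where 'k = 'k] by (simp add: power_int_minus field_simps)
  then show ?thesis
    unfolding pointed_laurent_def
    by (intro exI[of _ "map_poly (\<lambda>c. [:c:]) (Pk P1 P2 2)"]) (simp add: bicoeff_def coeff_map_poly coeff_Pk_0)
qed

lemma pointed_laurent_std_mon: "pointed_laurent (std_mon a) a"
proof -
  have "pointed_laurent (monomial4 n0 n1 n2 n3) (int n3 - int n1, int n0 - int n2)" for n0 n1 n2 n3
    using pointed_laurent_mult[OF pointed_laurent_mult[OF pointed_laurent_mult[OF
        pointed_laurent_power[OF pointed_laurent_x0] pointed_laurent_power[OF pointed_laurent_x1]]
        pointed_laurent_power[OF pointed_laurent_x2]] pointed_laurent_power[OF pointed_laurent_x3]]
    by (simp add: monomial4_def)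
  moreover have "(int (nat (fst a)) - int (nat (- fst a)), int (nat (snd a)) - int (nat (- snd a))) = a"
    by (simp add: prod_eq_iff)
  ultimately show ?thesis
    unfolding std_mon_eq_monomial4 by metis
qed

end

subsection \<open>Unitriangularity and the basis property\<close>

lemma nat_fst_plus_nat_snd_less:
  fixes a b :: "int \<times> int"
  assumes "b < a" and "0 < fst a" and "0 < snd a"
  shows "nat (fst b) + nat (snd b) < nat (fst a) + nat (snd a)"
  using assms by (auto simp: less_prod_def less_eq_prod_def)

context exchange_polys
begin

lemma clalg_pointed_unitriangular:
  assumes "u \<in> clalg P1 P2" and "pointed_laurent u a"
  obtains S c where "finite S" and "\<forall>i\<in>S. c i \<in> kk P1 P2 \<and> i < a"
    and "u = std_mon a + (\<Sum>i\<in>S. emb (c i) * std_mon i)"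
proof -
  have "u - std_mon a \<in> kspan P1 P2 std_mon"
    using assms(1) clalg_subset_kspan_std_mon by (blast intro: kspan_diff kspan_gen)
  then obtain S c where S: "finite S" "\<forall>i\<in>S. c i \<in> kk P1 P2"
    and u: "u - std_mon a = (\<Sum>i\<in>S. emb (c i) * std_mon i)"
    by (rule kspanE)
  define S' where "S' = {i \<in> S. c i \<noteq> 0}"
  have "i < a" if "i \<in> S'" for i
  proof (rule pointed_lincomb_support_below[OF pointed_laurent_std_mon \<open>finite S\<close>])
    show "laurent_coeff (\<Sum>i\<in>S. emb (c i) * std_mon i) b = 0" if "\<not> b < a" for b
      unfolding u[symmetric] using assms(2) pointed_laurent_std_mon that by (rule laurent_coeff_pointed_diff)
  qed (use that in \<open>auto simp: S'_def\<close>)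
  moreover have "(\<Sum>i\<in>S. emb (c i) * std_mon i) = (\<Sum>i\<in>S'. emb (c i) * std_mon i)"
    using S(1) by (intro sum.mono_neutral_right) (auto simp: S'_def)
  ultimately show thesis
    using that[of S' c] S u by (auto simp: S'_def algebra_simps)
qed

lemma std_mon_in_kspan_pointed_family:
  assumes in_clalg: "\<And>a. F a \<in> clalg P1 P2" and pointed: "\<And>a. pointed_laurent (F a) a"
    and standard: "\<And>a. \<not> (0 < fst a \<and> 0 < snd a) \<Longrightarrow> F a = std_mon a"
  shows "std_mon a \<in> kspan P1 P2 F"
proof (induction "nat (fst a) + nat (snd a)" arbitrary: a rule: less_induct)
  case less
  show ?case
  proof (cases "0 < fst a \<and> 0 < snd a")
    case False
    then show ?thesis
      using standard kspan_gen by metis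
  next
    case True
    obtain S c where S: "finite S" "\<forall>i\<in>S. c i \<in> kk P1 P2 \<and> i < a"
      and F: "F a = std_mon a + (\<Sum>i\<in>S. emb (c i) * std_mon i)"
      using clalg_pointed_unitriangular[OF in_clalg pointed] .
    have "std_mon a = F a - (\<Sum>i\<in>S. emb (c i) * std_mon i)"
      using F by simp
    also have "\<dots> \<in> kspan P1 P2 F"
      using S True by (intro kspan_diff kspan_gen kspan_sum kspan_smult less nat_fst_plus_nat_snd_less) auto
    finally show ?thesis .
  qed
qed

lemma is_basis_pointed_family:
  assumes "\<And>a. F a \<in> clalg P1 P2" and pointed: "\<And>a. pointed_laurent (F a) a"
    and "\<And>a. \<not> (0 < fst a \<and> 0 < snd a) \<Longrightarrow> F a = std_mon a"
  shows "is_basis (kk P1 P2) (clalg P1 P2) UNIV F"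
proof -
  have "std_mon a \<in> kspan P1 P2 F" for a
    using assms by (rule std_mon_in_kspan_pointed_family)
  then have "clalg P1 P2 \<subseteq> kspan P1 P2 F"
    using clalg_subset_kspan_std_mon kspan_subset by blast
  show ?thesis
    unfolding is_basis_def
  proof (intro conjI ballI allI impI)
    show "F a \<in> clalg P1 P2" for a
      by (rule assms(1))
    show "\<exists>S c. finite S \<and> S \<subseteq> UNIV \<and> (\<forall>i\<in>S. c i \<in> kk P1 P2) \<and> y = (\<Sum>i\<in>S. emb (c i) * F i)"
      if "y \<in> clalg P1 P2" for y
    proof -
      from that \<open>clalg P1 P2 \<subseteq> kspan P1 P2 F\<close> have "y \<in> kspan P1 P2 F"
        by blast
      then obtain S c where "finite S" "\<forall>i\<in>S. c i \<in> kk P1 P2" "y = (\<Sum>i\<in>S. emb (c i) * F i)"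
        by (rule kspanE)
      then show ?thesis
        by (intro exI[of _ S] exI[of _ c]) simp
    qed
    show "c i = 0"
      if "finite S \<and> S \<subseteq> UNIV \<and> (\<forall>i\<in>S. c i \<in> kk P1 P2) \<and> (\<Sum>i\<in>S. emb (c i) * F i) = 0"
        and "i \<in> S" for S c i
      using that pointed_lincomb_eq_0[OF pointed, of S c i] by simp
  qed
qed

end

theorem proposition2p9:
  fixes P1 P2 :: "'k::linordered_field poly"
    and x :: "int \<times> int \<Rightarrow> 'k ratfun"
  assumes "lead_coeff P1 = 1" and "lead_coeff P2 = 1"
    and "reflect_poly P1 = P1" and "reflect_poly P2 = P2"
    and "\<forall>i. coeff P1 i \<ge> 0" and "\<forall>i. coeff P2 i \<ge> 0"
    and "\<forall>a1 a2. x (a1, a2) \<in> clalg P1 P2"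
    and "\<forall>a1 a2. pointed P1 P2 (x (a1, a2)) a1 a2"
    and "\<forall>a1 a2. \<not> (a1 > 0 \<and> a2 > 0) \<longrightarrow> x (a1, a2) = z1 P1 P2 a1 a2"
  shows "is_basis (kk P1 P2) (clalg P1 P2) UNIV x"
proof -
  interpret exchange_polys P1 P2
    using assms(1-6) by unfold_locales
  show ?thesis
  proof (rule is_basis_pointed_family)
    fix a :: "int \<times> int"
    show "x a \<in> clalg P1 P2"
      using assms(7) by (cases a) simp
    show "pointed_laurent (x a) a"
      using pointed_imp_pointed_laurent[OF assms(8)[rule_format]] by (cases a) simp
    show "\<not> (0 < fst a \<and> 0 < snd a) \<Longrightarrow> x a = std_mon a"
      using assms(9) by (cases a) (simp add: std_mon_def)
  qed
qed

end
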